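(* Let $d\ge 5$ and let $\mathcal A_1,\dots,\mathcal A_d\subset 2^{[n]}$ be pairwise cross-IU families (for all $i\ne j$ and all $A\in\mathcal A_i$, $B\in\mathcal A_j$: $A\cap B\neq\emptyset$ and $A\cup B\neq[n]$) with $|\mathcal A_1|\ge|\mathcal A_2|\ge\dots\ge|\mathcal A_d|$. Then $$|\mathcal A_1|+\dots+|\mathcal A_d|\le d\,2^{n-2}.$$ Moreover, the inequality is strict unless $\mathcal A_1=\dots=\mathcal A_d$.
   Context: $[n]=\{1,\dots,n\}$ and $2^{[n]}$ is its power set. *)

theory Defs
  imports Complex_Main
begin

definition cross_IU :: "nat \<Rightarrow> nat set set \<Rightarrow> nat set set \<Rightarrow> bool" where
  "cross_IU n \<A> \<B> \<longleftrightarrow>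
     (\<forall>A\<in>\<A>. \<forall>B\<in>\<B>. A \<inter> B \<noteq> {} \<and> A \<union> B \<noteq> {1..n})"

end

theory Submission
  imports Defs
begin

text \<open>For two cross-IU families \<open>\<A>, \<B>\<close> on \<open>X\<close>, Kleitman's correlation inequality applied to
  the up-closure and the down-closure of \<open>\<A>\<close> gives \<open>|\<A>| 2^|X| \<le> |up \<A>| |down \<A>|\<close>.
  No member of the up-closure of \<open>\<A>\<close> is the complement of a member of the up-closure of \<open>\<B>\<close>,
  so the two have total size at most \<open>2^|X|\<close>, and likewise for the down-closures;
  by AM-GM \<open>|\<A>| |\<B>| \<le> 4^(|X|-2)\<close>.
  Together with \<open>|\<A>| + |\<B>| \<le> 2^|X|\<close>, an elementary optimisation over the two largest
  families bounds the sum, with equality only if every family has exactly \<open>2^n/4\<close> members.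
  Replacing \<open>\<A>\<^sub>i, \<A>\<^sub>j\<close> by \<open>\<A>\<^sub>i \<union> \<A>\<^sub>j, \<A>\<^sub>i \<inter> \<A>\<^sub>j\<close> keeps the families pairwise cross-IU and keeps
  the sum, so in the extremal case \<open>|\<A>\<^sub>i \<union> \<A>\<^sub>j| = |\<A>\<^sub>i|\<close>, i.e. \<open>\<A>\<^sub>j \<subseteq> \<A>\<^sub>i\<close>.\<close>

lemma card_Pow_insert_split:
  assumes "finite X" "x \<notin> X" "F \<subseteq> Pow (insert x X)"
  shows "card F = card (F \<inter> Pow X) + card {S \<in> Pow X. insert x S \<in> F}"
proof -
  have F_eq: "F = (F \<inter> Pow X) \<union> insert x ` {S \<in> Pow X. insert x S \<in> F}"
  proof (intro equalityI subsetI)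
    fix S assume "S \<in> F"
    show "S \<in> (F \<inter> Pow X) \<union> insert x ` {S \<in> Pow X. insert x S \<in> F}"
    proof (cases "x \<in> S")
      case True
      then have "S = insert x (S - {x})" "S - {x} \<in> Pow X"
        using \<open>S \<in> F\<close> assms(3) by auto
      then show ?thesis using \<open>S \<in> F\<close> by (metis (mono_tags, lifting) UnI2 image_eqI mem_Collect_eq)
    qed (use \<open>S \<in> F\<close> assms(3) in auto)
  qed auto
  have "inj_on (insert x) {S \<in> Pow X. insert x S \<in> F}"
    using assms(2) by (auto simp: inj_on_def)
  moreover have "finite F"
    using assms(1,3) finite_subset by blast
  ultimately show ?thesis
    using assms(1,2) by (subst F_eq, subst card_Un_disjoint) (auto simp: card_image)
qed

lemma chebyshev_two_terms:
  fixes u0 u1 v0 v1 c0 c1 k :: nat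
  assumes "c0 * k \<le> u0 * v0" "c1 * k \<le> u1 * v1" "u0 \<le> u1" "v1 \<le> v0"
  shows "(c0 + c1) * (2 * k) \<le> (u0 + u1) * (v0 + v1)"
proof -
  obtain p q where p: "u1 = u0 + p" and q: "v0 = v1 + q"
    using assms(3,4) le_Suc_ex by blast
  have "(c0 + c1) * (2 * k) \<le> 2 * (u0 * v0 + u1 * v1)"
    using add_mono[OF assms(1,2)] by (simp add: algebra_simps)
  also have "\<dots> \<le> 2 * (u0 * v0 + u1 * v1) + p * q" by simp
  also have "\<dots> = (u0 + u1) * (v0 + v1)" unfolding p q by (simp add: algebra_simps)
  finally show ?thesis .
qed

definition up_closed :: "'a set \<Rightarrow> 'a set set \<Rightarrow> bool" where
  "up_closed X U \<longleftrightarrow> U \<subseteq> Pow X \<and> (\<forall>S\<in>U. \<forall>T. S \<subseteq> T \<and> T \<subseteq> X \<longrightarrow> T \<in> U)"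

definition down_closed :: "'a set \<Rightarrow> 'a set set \<Rightarrow> bool" where
  "down_closed X D \<longleftrightarrow> D \<subseteq> Pow X \<and> (\<forall>S\<in>D. \<forall>T. T \<subseteq> S \<longrightarrow> T \<in> D)"

lemma up_closed_sections:
  assumes "up_closed (insert x X) U"
  shows "up_closed X (U \<inter> Pow X)"
    and "up_closed X {S \<in> Pow X. insert x S \<in> U}"
    and "U \<inter> Pow X \<subseteq> {S \<in> Pow X. insert x S \<in> U}"
proof -
  have up: "T \<in> U" if "S \<in> U" "S \<subseteq> T" "T \<subseteq> insert x X" for S T
    using assms that by (auto simp: up_closed_def)
  show "up_closed X (U \<inter> Pow X)"
    unfolding up_closed_def using up by blast
  show "up_closed X {S \<in> Pow X. insert x S \<in> U}"
    unfolding up_closed_def using up[of "insert x _" "insert x _"] by blast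
  show "U \<inter> Pow X \<subseteq> {S \<in> Pow X. insert x S \<in> U}"
    using up[of _ "insert x _"] by blast
qed

lemma down_closed_sections:
  assumes "down_closed (insert x X) D"
  shows "down_closed X (D \<inter> Pow X)"
    and "down_closed X {S \<in> Pow X. insert x S \<in> D}"
    and "{S \<in> Pow X. insert x S \<in> D} \<subseteq> D \<inter> Pow X"
proof -
  have down: "T \<in> D" if "S \<in> D" "T \<subseteq> S" for S T
    using assms that by (auto simp: down_closed_def)
  show "down_closed X (D \<inter> Pow X)"
    unfolding down_closed_def using down by blast
  show "down_closed X {S \<in> Pow X. insert x S \<in> D}"
    unfolding down_closed_def using down[of "insert x _" "insert x _"] by blast
  show "{S \<in> Pow X. insert x S \<in> D} \<subseteq> D \<inter> Pow X"
    using down[of "insert x _"] by blast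
qed

lemma kleitman_card_Int_le:
  assumes "finite X" "up_closed X U" "down_closed X D"
  shows "card (U \<inter> D) * 2 ^ card X \<le> card U * card D"
  using assms
proof (induction X arbitrary: U D rule: finite_induct)
  case empty
  then have "U \<subseteq> {{}}" "D \<subseteq> {{}}"
    by (auto simp: up_closed_def down_closed_def)
  then show ?case by (auto simp: subset_singleton_iff)
next
  case (insert x X)
  define U0 where "U0 = U \<inter> Pow X"
  define U1 where "U1 = {S \<in> Pow X. insert x S \<in> U}"
  define D0 where "D0 = D \<inter> Pow X"
  define D1 where "D1 = {S \<in> Pow X. insert x S \<in> D}"
  note U_sections = up_closed_sections[OF insert.prems(1), folded U0_def U1_def]
  note D_sections = down_closed_sections[OF insert.prems(2), folded D0_def D1_def]
  have "U \<subseteq> Pow (insert x X)" "D \<subseteq> Pow (insert x X)"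
    using insert.prems by (simp_all add: up_closed_def down_closed_def)
  note split = card_Pow_insert_split[OF insert.hyps(1,2)]
  have card_U: "card U = card U0 + card U1"
    unfolding U0_def U1_def by (rule split) fact
  have card_D: "card D = card D0 + card D1"
    unfolding D0_def D1_def by (rule split) fact
  have "(U \<inter> D) \<inter> Pow X = U0 \<inter> D0" "{S \<in> Pow X. insert x S \<in> U \<inter> D} = U1 \<inter> D1"
    unfolding U0_def U1_def D0_def D1_def by auto
  then have card_UD: "card (U \<inter> D) = card (U0 \<inter> D0) + card (U1 \<inter> D1)"
    using split[of "U \<inter> D"] \<open>U \<subseteq> Pow (insert x X)\<close> by auto
  have fin: "finite (Pow X)" using insert.hyps(1) by simp
  have "card U0 \<le> card U1"
    using U_sections(3) by (rule card_mono[rotated]) (auto simp: U1_def intro: finite_subset[OF _ fin])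
  moreover have "card D1 \<le> card D0"
    using D_sections(3) by (rule card_mono[rotated]) (auto simp: D0_def intro: finite_subset[OF _ fin])
  ultimately have "(card (U0 \<inter> D0) + card (U1 \<inter> D1)) * (2 * 2 ^ card X)
      \<le> (card U0 + card U1) * (card D0 + card D1)"
    using chebyshev_two_terms insert.IH[OF U_sections(1) D_sections(1)]
      insert.IH[OF U_sections(2) D_sections(2)] by blast
  then show ?case
    using insert.hyps card_U card_D card_UD by simp
qed

lemma card_add_le_if_no_complement:
  assumes "finite X" "F \<subseteq> Pow X" "G \<subseteq> Pow X" "\<And>S. S \<in> F \<Longrightarrow> X - S \<notin> G"
  shows "card F + card G \<le> 2 ^ card X"
proof -
  have fin: "finite (Pow X)" using assms(1) by simp
  have "inj_on (\<lambda>S. X - S) G"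
    using assms(3) by (auto simp: inj_on_def)
  then have "card F + card G = card F + card ((\<lambda>S. X - S) ` G)"
    by (simp add: card_image)
  also have "\<dots> = card (F \<union> (\<lambda>S. X - S) ` G)"
  proof (rule card_Un_disjoint[symmetric])
    show "finite F" "finite ((\<lambda>S. X - S) ` G)"
      using assms(2,3) fin by (auto intro: finite_subset)
    show "F \<inter> (\<lambda>S. X - S) ` G = {}"
    proof (intro equalityI subsetI, elim IntE imageE)
      fix S T assume "S \<in> F" "T \<in> G" "S = X - T"
      then have "X - S = T" using assms(3) by auto
      then show "S \<in> {}" using assms(4) \<open>S \<in> F\<close> \<open>T \<in> G\<close> by blast
    qed auto
  qed
  also have "\<dots> \<le> card (Pow X)"
    using assms(2) fin by (intro card_mono) auto
  finally show ?thesis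
    using assms(1) by (simp add: card_Pow)
qed

lemma card_add_le_if_cross_intersecting:
  assumes "finite X" "\<A> \<subseteq> Pow X" "\<B> \<subseteq> Pow X"
    and "\<And>S T. S \<in> \<A> \<Longrightarrow> T \<in> \<B> \<Longrightarrow> S \<inter> T \<noteq> {}"
  shows "card \<A> + card \<B> \<le> 2 ^ card X"
proof (rule card_add_le_if_no_complement[OF assms(1-3)])
  fix S assume "S \<in> \<A>"
  then show "X - S \<notin> \<B>"
    using assms(4)[of S "X - S"] by auto
qed

definition up_closure :: "'a set \<Rightarrow> 'a set set \<Rightarrow> 'a set set" where
  "up_closure X \<A> = {T. T \<subseteq> X \<and> (\<exists>S\<in>\<A>. S \<subseteq> T)}"

definition down_closure :: "'a set set \<Rightarrow> 'a set set" where
  "down_closure \<A> = {T. \<exists>S\<in>\<A>. T \<subseteq> S}"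

lemma up_closed_up_closure: "up_closed X (up_closure X \<A>)"
  unfolding up_closed_def up_closure_def by (blast intro: subset_trans)

lemma down_closed_down_closure: "\<A> \<subseteq> Pow X \<Longrightarrow> down_closed X (down_closure \<A>)"
  unfolding down_closed_def down_closure_def by (blast intro: subset_trans)

lemma card_mult_le_card_up_down_closure:
  assumes "finite X" "\<A> \<subseteq> Pow X"
  shows "card \<A> * 2 ^ card X \<le> card (up_closure X \<A>) * card (down_closure \<A>)"
proof -
  have "\<A> \<subseteq> up_closure X \<A> \<inter> down_closure \<A>"
    using assms(2) by (auto simp: up_closure_def down_closure_def)
  moreover have "finite (up_closure X \<A>)"
    using assms(1) by (simp add: up_closure_def)
  ultimately have "card \<A> \<le> card (up_closure X \<A> \<inter> down_closure \<A>)"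
    by (intro card_mono) auto
  also have "\<dots> * 2 ^ card X \<le> card (up_closure X \<A>) * card (down_closure \<A>)"
    using assms(1) up_closed_up_closure down_closed_down_closure[OF assms(2)]
    by (rule kleitman_card_Int_le)
  finally show ?thesis by simp
qed

lemma card_up_closure_add_le:
  assumes "finite X" "\<And>S T. S \<in> \<A> \<Longrightarrow> T \<in> \<B> \<Longrightarrow> S \<inter> T \<noteq> {}"
  shows "card (up_closure X \<A>) + card (up_closure X \<B>) \<le> 2 ^ card X"
proof (rule card_add_le_if_no_complement)
  fix S assume "S \<in> up_closure X \<A>"
  then show "X - S \<notin> up_closure X \<B>"
    using assms(2) by (fastforce simp: up_closure_def)
qed (use assms(1) in \<open>auto simp: up_closure_def\<close>)

lemma card_down_closure_add_le:
  assumes "finite X" "\<A> \<subseteq> Pow X" "\<B> \<subseteq> Pow X"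
    and "\<And>S T. S \<in> \<A> \<Longrightarrow> T \<in> \<B> \<Longrightarrow> S \<union> T \<noteq> X"
  shows "card (down_closure \<A>) + card (down_closure \<B>) \<le> 2 ^ card X"
proof (rule card_add_le_if_no_complement)
  fix S assume "S \<in> down_closure \<A>"
  then show "X - S \<notin> down_closure \<B>"
    using assms(2-4) by (fastforce simp: down_closure_def)
qed (use assms(1-3) in \<open>auto simp: down_closure_def\<close>)

lemma sixteen_mult_le_square_of_factor_bounds:
  fixes a b u u' v v' N :: real
  assumes "0 \<le> a" "0 \<le> b" "0 \<le> u" "0 \<le> u'" "0 \<le> v" "0 \<le> v'" "0 < N"
    and "a * N \<le> u * v" "b * N \<le> u' * v'" "u + u' \<le> N" "v + v' \<le> N"
  shows "16 * (a * b) \<le> N ^ 2"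
proof -
  have am_gm: "4 * (x * y) \<le> N ^ 2" if "0 \<le> x" "0 \<le> y" "x + y \<le> N" for x y :: real
  proof -
    have "4 * (x * y) \<le> (x + y) ^ 2"
      using zero_le_power2[of "x - y"] by (simp add: power2_eq_square algebra_simps)
    also have "\<dots> \<le> N ^ 2"
      using that by (intro power_mono) auto
    finally show ?thesis .
  qed
  have "(a * b) * N ^ 2 = (a * N) * (b * N)"
    by (simp add: power2_eq_square)
  also have "\<dots> \<le> (u * v) * (u' * v')"
    by (rule mult_mono) (use assms in auto)
  finally have "16 * (a * b) * N ^ 2 \<le> (4 * (u * u')) * (4 * (v * v'))"
    by (simp add: algebra_simps)
  also have "\<dots> \<le> N ^ 2 * N ^ 2"
    by (rule mult_mono) (use assms am_gm[of u u'] am_gm[of v v'] in auto)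
  finally have "16 * (a * b) * N ^ 2 \<le> N ^ 2 * N ^ 2" .
  then show ?thesis
    by (rule mult_right_le_imp_le) (use assms(7) in simp)
qed

lemma card_mult_le_if_cross_IU:
  assumes "finite X" "\<A> \<subseteq> Pow X" "\<B> \<subseteq> Pow X"
    and "\<And>S T. S \<in> \<A> \<Longrightarrow> T \<in> \<B> \<Longrightarrow> S \<inter> T \<noteq> {} \<and> S \<union> T \<noteq> X"
  shows "16 * (real (card \<A>) * real (card \<B>)) \<le> (2 ^ card X) ^ 2"
proof (rule sixteen_mult_le_square_of_factor_bounds)
  show "real (card \<A>) * 2 ^ card X
      \<le> real (card (up_closure X \<A>)) * real (card (down_closure \<A>))"
    "real (card \<B>) * 2 ^ card X
      \<le> real (card (up_closure X \<B>)) * real (card (down_closure \<B>))"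
    using of_nat_mono[OF card_mult_le_card_up_down_closure[OF assms(1,2)], where 'a=real]
      of_nat_mono[OF card_mult_le_card_up_down_closure[OF assms(1,3)], where 'a=real]
    by simp_all
  show "real (card (up_closure X \<A>)) + real (card (up_closure X \<B>)) \<le> 2 ^ card X"
    using of_nat_mono[OF card_up_closure_add_le[OF assms(1), of \<A> \<B>], where 'a=real] assms(4)
    by simp
  show "real (card (down_closure \<A>)) + real (card (down_closure \<B>)) \<le> 2 ^ card X"
    using of_nat_mono[OF card_down_closure_add_le[OF assms(1-3)], where 'a=real] assms(4)
    by simp
qed simp_all

lemma le_if_mult_le_square:
  fixes a x m :: real
  assumes "0 \<le> m" "x \<le> a" "a * x \<le> m ^ 2"
  shows "x \<le> m"
proof (rule ccontr)
  assume "\<not> x \<le> m"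
  then have "m * m < x * x"
    using assms(1) by (intro mult_strict_mono) auto
  also have "\<dots> \<le> a * x"
    using assms(1,2) \<open>\<not> x \<le> m\<close> by (intro mult_right_mono) auto
  finally show False
    using assms(3) by (simp add: power2_eq_square)
qed

lemma top_two_bound:
  fixes a x m :: real
  assumes "0 \<le> x" "x \<le> a" "a * x \<le> m ^ 2" "a + x \<le> 4 * m"
  shows "x \<le> m" and "a + 4 * x \<le> 5 * m" and "a + 4 * x = 5 * m \<Longrightarrow> x = m"
proof -
  have "0 \<le> m" using assms by linarith
  show x_le: "x \<le> m"
    using le_if_mult_le_square[OF \<open>0 \<le> m\<close> assms(2,3)] .
  have "a + 4 * x \<le> 5 * m \<and> (a + 4 * x = 5 * m \<longrightarrow> x = m)"
  proof (cases "4 * x \<le> m")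
    case True
    then show ?thesis using assms by linarith
  next
    case False
    have gap: "0 \<le> (4 * x - m) * (m - x)"
      using False x_le by (intro mult_nonneg_nonneg) auto
    have upper: "x * (a + 4 * x) \<le> m ^ 2 + 4 * x * x"
      using assms(3) by (simp add: algebra_simps)
    also have "\<dots> \<le> x * (5 * m)"
      using gap by (simp add: algebra_simps power2_eq_square)
    finally have le: "x * (a + 4 * x) \<le> x * (5 * m)" .
    moreover have "x = m" if "a + 4 * x = 5 * m"
    proof -
      have "x * (5 * m) \<le> m ^ 2 + 4 * x * x"
        using upper that by simp
      then have "(4 * x - m) * (m - x) \<le> 0"
        by (simp add: algebra_simps power2_eq_square)
      then have "(4 * x - m) * (m - x) = 0"
        using gap by linarith
      then show ?thesis using False by simp
    qed
    ultimately show ?thesis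
      using False \<open>0 \<le> m\<close> by (simp add: mult_le_cancel_left)
  qed
  then show "a + 4 * x \<le> 5 * m" and "a + 4 * x = 5 * m \<Longrightarrow> x = m" by blast+
qed

lemma obtain_max_on_finite:
  fixes f :: "'i \<Rightarrow> 'a::linorder"
  assumes "finite J" "J \<noteq> {}"
  obtains p where "p \<in> J" "\<And>i. i \<in> J \<Longrightarrow> f i \<le> f p"
proof -
  have "Max (f ` J) \<in> f ` J"
    using assms by simp
  then obtain p where "p \<in> J" "Max (f ` J) = f p"
    by blast
  moreover have "f i \<le> Max (f ` J)" if "i \<in> J" for i
    using assms(1) that by simp
  ultimately show ?thesis
    using that by metis
qed

lemma obtain_two_largest:
  fixes f :: "'i \<Rightarrow> 'a::linorder"
  assumes "finite I" "2 \<le> card I"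
  obtains p q where "p \<in> I" "\<And>i. i \<in> I \<Longrightarrow> f i \<le> f p"
    and "q \<in> I" "q \<noteq> p" "\<And>i. i \<in> I \<Longrightarrow> i \<noteq> p \<Longrightarrow> f i \<le> f q"
proof -
  have "I \<noteq> {}"
    using assms(2) by auto
  then obtain p where p: "p \<in> I" "\<And>i. i \<in> I \<Longrightarrow> f i \<le> f p"
    using obtain_max_on_finite[OF assms(1), where f = f] by blast
  have "card (I - {p}) = card I - 1"
    using p(1) assms(1) by simp
  then have "I - {p} \<noteq> {}"
    using assms(2) by (intro notI) simp
  then obtain q where "q \<in> I - {p}" "\<And>i. i \<in> I - {p} \<Longrightarrow> f i \<le> f q"
    using obtain_max_on_finite[of "I - {p}" f] assms(1) by blast
  then have "q \<in> I" "q \<noteq> p" "\<And>i. i \<in> I \<Longrightarrow> i \<noteq> p \<Longrightarrow> f i \<le> f q"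
    by auto
  with p show ?thesis
    by (rule that)
qed

lemma sum_le_if_pairwise_mult_add_bounded:
  fixes f :: "'i \<Rightarrow> real" and m :: real
  assumes "finite I" "5 \<le> card I"
    and nonneg: "\<And>i. i \<in> I \<Longrightarrow> 0 \<le> f i"
    and mult_le: "\<And>i j. i \<in> I \<Longrightarrow> j \<in> I \<Longrightarrow> i \<noteq> j \<Longrightarrow> f i * f j \<le> m ^ 2"
    and add_le: "\<And>i j. i \<in> I \<Longrightarrow> j \<in> I \<Longrightarrow> i \<noteq> j \<Longrightarrow> f i + f j \<le> 4 * m"
  shows "sum f I \<le> card I * m" and "sum f I = card I * m \<Longrightarrow> i \<in> I \<Longrightarrow> f i = m"
proof -
  have "2 \<le> card I"
    using assms(2) by linarith
  then obtain p q where p: "p \<in> I" "\<And>i. i \<in> I \<Longrightarrow> f i \<le> f p"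
    and q: "q \<in> I" "q \<noteq> p" "\<And>i. i \<in> I \<Longrightarrow> i \<noteq> p \<Longrightarrow> f i \<le> f q"
    using obtain_two_largest[OF assms(1), where f = f] by blast
  note top_two = top_two_bound[of "f q" "f p" m,
      OF nonneg[OF q(1)] p(2)[OF q(1)] mult_le[OF p(1) q(1) q(2)[symmetric]] add_le[OF p(1) q(1) q(2)[symmetric]]]
  have "sum f I = f p + sum f (I - {p})"
    using assms(1) p(1) by (simp add: sum.remove)
  also have "sum f (I - {p}) \<le> (\<Sum>i\<in>I - {p}. f q)"
    using q(3) by (intro sum_mono) auto
  also have "(\<Sum>i\<in>I - {p}. f q) = 4 * f q + (real (card I) - 5) * f q"
    using assms(1,2) p(1) by (simp add: algebra_simps of_nat_diff)
  finally have sum_le: "sum f I \<le> (f p + 4 * f q) + (real (card I) - 5) * f q"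
    by simp
  have "(real (card I) - 5) * f q \<le> (real (card I) - 5) * m"
    using assms(2) top_two(1) by (intro mult_left_mono) auto
  then have tail: "(real (card I) - 5) * f q \<le> card I * m - 5 * m"
    by (simp add: algebra_simps)
  show "sum f I \<le> card I * m"
    using sum_le top_two(2) tail by linarith
  assume eq: "sum f I = card I * m"
  have "f p + 4 * f q = 5 * m"
    using sum_le top_two(2) tail eq by linarith
  then have "f q = m"
    by (rule top_two(3))
  moreover have "f p = m"
    using sum_le top_two(2) tail eq \<open>f q = m\<close> by linarith
  ultimately have below: "0 \<le> m - f i" if "i \<in> I" for i
    using p(2) q(3) that by (cases "i = p") auto
  have "(\<Sum>i\<in>I. m - f i) = 0"
    using eq by (simp add: sum_subtractf)
  then have "\<forall>i\<in>I. m - f i = 0"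
    using sum_nonneg_eq_0_iff[OF assms(1), of "\<lambda>i. m - f i"] below by simp
  then show "i \<in> I \<Longrightarrow> f i = m" by simp
qed

abbreviation pairwise_cross_IU :: "nat \<Rightarrow> 'i set \<Rightarrow> ('i \<Rightarrow> nat set set) \<Rightarrow> bool" where
  "pairwise_cross_IU n I \<A> \<equiv> pairwise (\<lambda>i j. cross_IU n (\<A> i) (\<A> j)) I"

lemma cross_IU_card_bounds:
  assumes "\<A> \<subseteq> Pow {1..n}" "\<B> \<subseteq> Pow {1..n}" "cross_IU n \<A> \<B>"
  shows "real (card \<A>) * real (card \<B>) \<le> (2 ^ n / 4) ^ 2"
    and "real (card \<A>) + real (card \<B>) \<le> 4 * (2 ^ n / 4)"
proof -
  have "16 * (real (card \<A>) * real (card \<B>)) \<le> (2 ^ n) ^ 2"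
    using card_mult_le_if_cross_IU[of "{1..n}"] assms by (simp add: cross_IU_def)
  then show "real (card \<A>) * real (card \<B>) \<le> (2 ^ n / 4) ^ 2"
    by (simp add: power_divide)
  have "card \<A> + card \<B> \<le> 2 ^ n"
    using card_add_le_if_cross_intersecting[of "{1..n}"] assms by (simp add: cross_IU_def)
  then show "real (card \<A>) + real (card \<B>) \<le> 4 * (2 ^ n / 4)"
    using of_nat_mono[where 'a=real] by fastforce
qed

lemma cross_IU_sum_card_le:
  fixes \<A> :: "'i \<Rightarrow> nat set set"
  assumes "finite I" "5 \<le> card I" "\<And>i. i \<in> I \<Longrightarrow> \<A> i \<subseteq> Pow {1..n}" "pairwise_cross_IU n I \<A>"
  shows "(\<Sum>i\<in>I. real (card (\<A> i))) \<le> card I * (2 ^ n / 4)"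
    and "(\<Sum>i\<in>I. real (card (\<A> i))) = card I * (2 ^ n / 4) \<Longrightarrow> i \<in> I
      \<Longrightarrow> real (card (\<A> i)) = 2 ^ n / 4"
proof -
  have "cross_IU n (\<A> i) (\<A> j)" if "i \<in> I" "j \<in> I" "i \<noteq> j" for i j
    using assms(4) that by (simp add: pairwise_def)
  note bounds = cross_IU_card_bounds[OF assms(3) assms(3) this]
  note main = sum_le_if_pairwise_mult_add_bounded[OF assms(1,2), of "\<lambda>i. real (card (\<A> i))" "2 ^ n / 4"]
  show "(\<Sum>i\<in>I. real (card (\<A> i))) \<le> card I * (2 ^ n / 4)"
    by (rule main(1)[OF _ bounds]) simp
  show "real (card (\<A> i)) = 2 ^ n / 4"
    if "(\<Sum>i\<in>I. real (card (\<A> i))) = card I * (2 ^ n / 4)" "i \<in> I"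
    by (rule main(2)[OF _ bounds that]) simp
qed

lemma cross_IU_sym: "cross_IU n \<A> \<B> \<Longrightarrow> cross_IU n \<B> \<A>"
  unfolding cross_IU_def by (metis Int_commute Un_commute)

lemma cross_IU_Un_left: "cross_IU n \<A> \<C> \<Longrightarrow> cross_IU n \<B> \<C> \<Longrightarrow> cross_IU n (\<A> \<union> \<B>) \<C>"
  unfolding cross_IU_def by blast

lemma cross_IU_Int_left: "cross_IU n \<A> \<C> \<Longrightarrow> cross_IU n (\<A> \<inter> \<B>) \<C>"
  unfolding cross_IU_def by blast

lemma cross_IU_Un_Int: "cross_IU n \<A> \<B> \<Longrightarrow> cross_IU n (\<A> \<union> \<B>) (\<A> \<inter> \<B>)"
  unfolding cross_IU_def by (metis Int_commute Un_commute IntD1 IntD2 UnE)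

lemma pairwise_cross_IU_Un_Int_update:
  assumes "pairwise_cross_IU n I \<A>" "i \<in> I" "j \<in> I" "i \<noteq> j"
  shows "pairwise_cross_IU n I (\<A>(i := \<A> i \<union> \<A> j, j := \<A> i \<inter> \<A> j))"
proof (rule pairwiseI)
  have cross: "cross_IU n (\<A> k) (\<A> l)" if "k \<in> I" "l \<in> I" "k \<noteq> l" for k l
    using assms(1) that by (simp add: pairwise_def)
  have new_old: "cross_IU n ((\<A>(i := \<A> i \<union> \<A> j, j := \<A> i \<inter> \<A> j)) k) (\<A> l)"
    if "k \<in> I" "l \<in> I" "k \<noteq> l" "l \<noteq> i" "l \<noteq> j" for k l
    using that assms(2-4) cross
    by (auto intro: cross_IU_Un_left cross_IU_Int_left)
  fix k l assume "k \<in> I" "l \<in> I" "k \<noteq> l"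
  then consider "l \<noteq> i" "l \<noteq> j" | "k \<noteq> i" "k \<noteq> j" | "k = i" "l = j" | "k = j" "l = i"
    by blast
  then show "cross_IU n ((\<A>(i := \<A> i \<union> \<A> j, j := \<A> i \<inter> \<A> j)) k)
      ((\<A>(i := \<A> i \<union> \<A> j, j := \<A> i \<inter> \<A> j)) l)"
  proof cases
    case 1
    with new_old[of k l] show ?thesis using \<open>k \<in> I\<close> \<open>l \<in> I\<close> \<open>k \<noteq> l\<close> by simp
  next
    case 2
    with cross_IU_sym[OF new_old[of l k]] show ?thesis using \<open>k \<in> I\<close> \<open>l \<in> I\<close> \<open>k \<noteq> l\<close> by simp
  next
    case 3
    with cross_IU_Un_Int[OF cross[OF assms(2-4)]] show ?thesis using assms(4) by simp
  next
    case 4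
    with cross_IU_sym[OF cross_IU_Un_Int[OF cross[OF assms(2-4)]]] show ?thesis using assms(4) by simp
  qed
qed

lemma sum_card_Un_Int_update:
  assumes "finite I" "i \<in> I" "j \<in> I" "i \<noteq> j" "finite (\<A> i)" "finite (\<A> j)"
  shows "(\<Sum>k\<in>I. real (card ((\<A>(i := \<A> i \<union> \<A> j, j := \<A> i \<inter> \<A> j)) k)))
    = (\<Sum>k\<in>I. real (card (\<A> k)))"
proof -
  have "real (card (\<A> i \<union> \<A> j)) + real (card (\<A> i \<inter> \<A> j)) = real (card (\<A> i)) + real (card (\<A> j))"
    using card_Un_Int[OF assms(5,6)] by simp
  with assms(1-4) show ?thesis
    by (simp add: sum.remove[of I i] sum.remove[of "I - {i}" j] insert_Diff_if)
qed

lemma cross_IU_sum_card_eq_imp_eq: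
  fixes \<A> :: "'i \<Rightarrow> nat set set"
  assumes "finite I" "5 \<le> card I" "\<And>i. i \<in> I \<Longrightarrow> \<A> i \<subseteq> Pow {1..n}" "pairwise_cross_IU n I \<A>"
    and "(\<Sum>i\<in>I. real (card (\<A> i))) = card I * (2 ^ n / 4)"
    and "i \<in> I" "j \<in> I"
  shows "\<A> i = \<A> j"
proof -
  have fin: "finite (\<A> k)" if "k \<in> I" for k
    by (rule finite_subset[OF assms(3)[OF that]]) simp
  have "\<A> l \<subseteq> \<A> k" if kl: "k \<in> I" "l \<in> I" "k \<noteq> l" for k l
  proof -
    define \<B> where "\<B> = \<A>(k := \<A> k \<union> \<A> l, l := \<A> k \<inter> \<A> l)"
    have subsets: "\<B> i \<subseteq> Pow {1..n}" if "i \<in> I" for i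
      using assms(3) kl that by (auto simp: \<B>_def)
    have cross: "pairwise_cross_IU n I \<B>"
      unfolding \<B>_def using pairwise_cross_IU_Un_Int_update[OF assms(4) kl] .
    have sum_eq: "(\<Sum>i\<in>I. real (card (\<B> i))) = card I * (2 ^ n / 4)"
      unfolding \<B>_def using sum_card_Un_Int_update[OF assms(1) kl fin[OF kl(1)] fin[OF kl(2)]] kl assms(5) by simp
    have "real (card (\<B> k)) = 2 ^ n / 4"
      using cross_IU_sum_card_le(2)[OF assms(1,2) subsets cross sum_eq kl(1)] .
    also have "2 ^ n / 4 = real (card (\<A> k))"
      using cross_IU_sum_card_le(2)[OF assms(1-5) kl(1)] by simp
    finally have "card (\<A> k \<union> \<A> l) = card (\<A> k)"
      using kl(3) by (simp add: \<B>_def)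
    then have "\<A> k = \<A> k \<union> \<A> l"
      using fin kl by (intro card_subset_eq) auto
    then show ?thesis by blast
  qed
  then show ?thesis
    using assms(6,7) by (cases "i = j") blast+
qed

theorem corollary3p2:
  fixes n d :: nat and \<A> :: "nat \<Rightarrow> nat set set"
  assumes "d \<ge> 5"
    and "\<And>i. i \<in> {1..d} \<Longrightarrow> \<A> i \<subseteq> Pow {1..n}"
    and "\<And>i j. i \<in> {1..d} \<Longrightarrow> j \<in> {1..d} \<Longrightarrow> i \<noteq> j \<Longrightarrow> cross_IU n (\<A> i) (\<A> j)"
    and "\<And>i j. i \<in> {1..d} \<Longrightarrow> j \<in> {1..d} \<Longrightarrow> i \<le> j \<Longrightarrow> card (\<A> j) \<le> card (\<A> i)"
  shows "(\<Sum>i=1..d. real (card (\<A> i))) \<le> real d * 2 ^ n / 4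
         \<and> ((\<Sum>i=1..d. real (card (\<A> i))) < real d * 2 ^ n / 4
         \<or> (\<forall>i\<in>{1..d}. \<forall>j\<in>{1..d}. \<A> i = \<A> j))"
proof -
  have fin: "finite {1..d}" and card: "5 \<le> card {1..d}"
    using assms(1) by simp_all
  have cross: "pairwise_cross_IU n {1..d} \<A>"
    using assms(3) by (simp add: pairwise_def)
  have bound: "real (card {1..d}) * (2 ^ n / 4) = real d * 2 ^ n / 4"
    by simp
  have "(\<Sum>i=1..d. real (card (\<A> i))) \<le> real d * 2 ^ n / 4"
    using cross_IU_sum_card_le(1)[OF fin card assms(2) cross] unfolding bound .
  moreover have "\<forall>i\<in>{1..d}. \<forall>j\<in>{1..d}. \<A> i = \<A> j"
    if "(\<Sum>i=1..d. real (card (\<A> i))) = real d * 2 ^ n / 4"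
    using cross_IU_sum_card_eq_imp_eq[OF fin card assms(2) cross that[folded bound]] by blast
  ultimately show ?thesis by linarith
qed

end
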